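(* In the setting of the context (in any of the cases for the sign of $\partial_v r_-$), every radially outgoing null geodesic that is initially located outside or on the outer AH never intersects the outer AH at any later time, and reaches future null infinity, i.e. $x(v)\to\infty$ as $v\to\infty$.
   Context: Spherically symmetric spacetime $ds^2=-f(v,r)A(v,r)^2dv^2+2A(v,r)\,dr\,dv+r^2d\Omega^2$ with $A>0$, $f,A\to1$ as $r\to\infty$, $f(v,0)=1$, $\partial_rf(v,0)=\partial_rA(v,0)=0$; $f(v,\cdot)$ has exactly two zeros $r_+(v)>r_-(v)$ (outer/inner apparent horizons, AHs), $f=F(r-r_+)(r-r_-)$ with $F>0$, and $h=AF>0$. Assumptions: $\partial_v r_+<0$; $r_\pm(v)\to r_c$ as $v\to\infty$; the sign of $\partial_v r_-$ is constant; the $v\to\infty$ limits of $A,F,h$ behave as analytic functions of $r$, so all $\partial_r^n h$ converge as $v\to\infty$ (write $h(\infty,x)$ for the limit). With $x=r-r_c$, $x_\pm=r_\pm-r_c$ and $h$ regarded as a function of $(v,x)$, radially outgoing null geodesics are the solutions of $dx/dv=\tfrac12h(v,x)(x-x_+(v))(x-x_-(v))$. *)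

theory Defs
  imports "HOL-Analysis.Analysis"
begin

definition real_analytic_on :: "(real \<Rightarrow> real) \<Rightarrow> real set \<Rightarrow> bool" where
  "real_analytic_on f S \<longleftrightarrow>
     (\<forall>y\<in>S. \<exists>r>0. \<exists>a::nat \<Rightarrow> real. \<forall>x. \<bar>x - y\<bar> < r \<longrightarrow> (\<lambda>n. a n * (x - y) ^ n) sums f x)"

end

theory Submission
  imports Defs
begin

(*
  Write g = x - x_+.  Wherever g vanishes, x' = 0 while x_+' < 0, so g' > 0 there: a
  function that can only cross zero upwards and starts non-negative stays positive,
  hence the geodesic never meets the outer horizon again.  Beyond the horizon x' > 0,
  so x is increasing.  If it stayed bounded it would converge to some L > 0, and then
  x' would tend to h(\<infinity>, L) L^2 / 2 > 0, forcing linear growth of x: contradiction.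
*)

lemma pos_right_of_nonneg_point:
  fixes g :: "real \<Rightarrow> real"
  assumes deriv: "(g has_real_derivative d) (at s within S)"
    and zero: "g s = 0 \<Longrightarrow> d > 0"
    and "g s \<ge> 0"
  shows "\<exists>e>0. \<forall>h. h > 0 \<longrightarrow> h < e \<longrightarrow> s + h \<in> S \<longrightarrow> g (s + h) > 0"
proof (cases "g s = 0")
  case True
  then show ?thesis
    using has_real_derivative_pos_inc_right[OF deriv zero] by auto
next
  case False
  with \<open>g s \<ge> 0\<close> have "g s > 0"
    by simp
  moreover have "continuous (at s within S) g"
    using deriv by (rule DERIV_continuous)
  ultimately obtain e where "e > 0"
    and e: "\<And>t. t \<in> S \<Longrightarrow> dist t s < e \<Longrightarrow> dist (g t) (g s) < g s"
    unfolding continuous_within_eps_delta by metis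
  have "g (s + h) > 0" if "h > 0" "h < e" "s + h \<in> S" for h
    using e[of "s + h"] that by (auto simp: dist_real_def)
  with \<open>e > 0\<close> show ?thesis
    by blast
qed

lemma pos_if_deriv_pos_at_zeros:
  fixes g g' :: "real \<Rightarrow> real"
  assumes deriv: "\<And>t. t \<ge> a \<Longrightarrow> (g has_real_derivative g' t) (at t within {a..})"
    and zeros: "\<And>t. t \<ge> a \<Longrightarrow> g t = 0 \<Longrightarrow> g' t > 0"
    and start: "g a \<ge> 0"
    and "a < v"
  shows "g v > 0"
proof (rule ccontr)
  assume "\<not> g v > 0"
  obtain w where w: "a < w" "g w < 0"
  proof (cases "g v = 0")
    case True
    then obtain d where d: "d > 0" "\<And>h. h > 0 \<Longrightarrow> v - h \<in> {a..} \<Longrightarrow> h < d \<Longrightarrow> g (v - h) < 0"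
      using has_real_derivative_pos_inc_left[OF deriv zeros, of v] \<open>a < v\<close> by auto
    define h where "h = min d (v - a) / 2"
    have "h > 0" "h < d" "a < v - h"
      using d(1) \<open>a < v\<close> unfolding h_def by (auto simp: min_def field_simps)
    then show ?thesis
      using that d(2)[of h] by auto
  next
    case False
    then show ?thesis
      using that[of v] \<open>\<not> g v > 0\<close> \<open>a < v\<close> by auto
  qed
  have cont: "continuous_on {a..} g"
    using DERIV_continuous[OF deriv] by (auto simp: continuous_on_eq_continuous_within)
  \<comment> \<open>The last point of \<open>[a, w]\<close> with \<open>g \<ge> 0\<close> cannot exist: \<open>g\<close> is still positive just to its right.\<close>
  define S where "S = {a..w} \<inter> g -` {0..}"
  have "closed S"
    unfolding S_def by (intro continuous_closed_preimage continuous_on_subset[OF cont]) auto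
  moreover have "a \<in> S" "bdd_above S"
    using start w unfolding S_def by auto
  ultimately have "Sup S \<in> S"
    using closed_contains_Sup by blast
  define s where "s = Sup S"
  have s: "a \<le> s" "s < w" "g s \<ge> 0"
    using \<open>Sup S \<in> S\<close> w unfolding s_def S_def by (auto simp: order.order_iff_strict)
  obtain d where d: "d > 0" "\<And>h. h > 0 \<Longrightarrow> h < d \<Longrightarrow> s + h \<in> {a..} \<Longrightarrow> g (s + h) > 0"
    using pos_right_of_nonneg_point[OF deriv zeros] s by blast
  define h where "h = min d (w - s) / 2"
  have h: "0 < h" "h < d" "s + h \<le> w"
    using d(1) s unfolding h_def by (auto simp: min_def field_simps)
  then have "s + h \<in> S"
    using d(2)[of h] s unfolding S_def by auto
  then have "s + h \<le> s"
    unfolding s_def using \<open>bdd_above S\<close> by (rule cSup_upper)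
  with h show False
    by simp
qed

lemma gt_strictly_decreasing_barrier:
  fixes x xp xp' D :: "real \<Rightarrow> real"
  assumes x_deriv: "\<And>t. t \<ge> a \<Longrightarrow> (x has_real_derivative D t) (at t within {a..})"
    and xp_deriv: "\<And>t. (xp has_real_derivative xp' t) (at t)"
    and xp_decr: "\<And>t. xp' t < 0"
    and contact: "\<And>t. t \<ge> a \<Longrightarrow> x t = xp t \<Longrightarrow> D t \<ge> 0"
    and "x a \<ge> xp a" "a < v"
  shows "x v > xp v"
proof -
  have "0 < x v - xp v"
  proof (rule pos_if_deriv_pos_at_zeros[where g = "\<lambda>t. x t - xp t" and g' = "\<lambda>t. D t - xp' t"])
    show "((\<lambda>t. x t - xp t) has_real_derivative D t - xp' t) (at t within {a..})" if "t \<ge> a" for t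
      by (intro derivative_intros x_deriv that has_field_derivative_at_within[OF xp_deriv])
    show "D t - xp' t > 0" if "t \<ge> a" "x t - xp t = 0" for t
      using contact[of t] xp_decr[of t] that by simp
  qed (use assms in simp_all)
  then show ?thesis
    by simp
qed

lemma has_field_derivative_at_if_within_atLeast:
  fixes f :: "real \<Rightarrow> real"
  assumes "(f has_field_derivative D) (at t within {a..})" "a < t"
  shows "(f has_field_derivative D) (at t)"
proof -
  have "at t within {a..} = at t"
    using \<open>a < t\<close> by (intro at_within_open_subset[of _ "{a<..}"]) auto
  with assms(1) show ?thesis
    by (simp only:)
qed

lemma gt_limit_if_deriv_neg:
  fixes f f' :: "real \<Rightarrow> real"
  assumes deriv: "\<And>t. (f has_real_derivative f' t) (at t)"
    and neg: "\<And>t. f' t < 0"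
    and lim: "(f \<longlongrightarrow> l) at_top"
  shows "f t > l"
proof -
  have decreasing: "f s < f u" if "u < s" for u s
    using DERIV_neg_imp_decreasing[OF that] deriv neg by blast
  have "\<forall>\<^sub>F s in at_top. f s \<le> f (t + 1)"
    using decreasing by (intro eventually_at_top_linorderI[of "t + 1"]) (fastforce simp: order.order_iff_strict)
  then have "l \<le> f (t + 1)"
    using lim by (intro tendsto_upperbound) auto
  also have "\<dots> < f t"
    using decreasing by simp
  finally show ?thesis .
qed

lemma mono_on_tendsto_or_filterlim_at_top:
  fixes f :: "real \<Rightarrow> real"
  assumes mono: "mono_on {a<..} f"
  obtains "filterlim f at_top at_top"
    | L where "(f \<longlongrightarrow> L) at_top" "\<And>t. t > a \<Longrightarrow> f t \<le> L"
proof (cases "bdd_above (f ` {a<..})")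
  case True
  define L where "L = Sup (f ` {a<..})"
  have le_L: "f t \<le> L" if "t > a" for t
    unfolding L_def using True that by (auto intro: cSup_upper)
  have "(f \<longlongrightarrow> L) at_top"
  proof (rule order_tendstoI)
    fix c assume "c < L"
    then obtain t where t: "t > a" "c < f t"
      unfolding L_def using less_cSup_iff[OF _ True] by auto
    then show "\<forall>\<^sub>F s in at_top. c < f s"
      using mono_onD[OF mono] by (intro eventually_at_top_linorderI[of t]) (auto intro: less_le_trans)
  next
    fix c assume "c > L"
    then show "\<forall>\<^sub>F s in at_top. f s < c"
      using le_L by (intro eventually_at_top_linorderI[of "a + 1"])
        (meson le_less_trans less_add_one order_less_le_trans)
  qed
  with le_L show ?thesis
    using that(2) by blast
next
  case False
  have "\<forall>\<^sub>F s in at_top. c \<le> f s" for c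
  proof -
    have "\<not> (\<forall>t\<in>{a<..}. f t \<le> c)"
      using False bdd_aboveI2[of "{a<..}" f c] by auto
    then obtain t where t: "t > a" "c < f t"
      by (auto simp: not_le)
    have "c \<le> f s" if "s \<ge> t" for s
      using t mono_onD[OF mono, of t s] that by simp
    then show ?thesis
      by (rule eventually_at_top_linorderI)
  qed
  then show ?thesis
    using that(1) filterlim_at_top by blast
qed

lemma filterlim_at_top_if_deriv_tendsto_pos:
  fixes f f' :: "real \<Rightarrow> real"
  assumes deriv: "\<And>t. t > a \<Longrightarrow> (f has_real_derivative f' t) (at t)"
    and lim: "(f' \<longlongrightarrow> l) at_top"
    and "l > 0"
  shows "filterlim f at_top at_top"
proof -
  have "\<forall>\<^sub>F t in at_top. l / 2 < f' t"
    using order_tendstoD(1)[OF lim, of "l / 2"] \<open>l > 0\<close> by simp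
  then have "\<forall>\<^sub>F t in at_top. l / 2 \<le> f' t \<and> a < t"
    using eventually_gt_at_top[of a] by eventually_elim simp
  then obtain b where b: "\<And>t. t \<ge> b \<Longrightarrow> l / 2 \<le> f' t \<and> a < t"
    unfolding eventually_at_top_linorder by blast
  have "\<forall>\<^sub>F t in at_top. f b - l / 2 * b + l / 2 * t \<le> f t"
  proof (rule eventually_at_top_linorderI)
    fix t assume "t \<ge> b"
    have "(\<lambda>s. f s - l / 2 * s) b \<le> (\<lambda>s. f s - l / 2 * s) t"
    proof (rule DERIV_nonneg_imp_nondecreasing[OF \<open>t \<ge> b\<close>])
      fix s assume "b \<le> s"
      with b[of s] show "\<exists>y. ((\<lambda>s. f s - l / 2 * s) has_real_derivative y) (at s) \<and> y \<ge> 0"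
        by (intro exI[of _ "f' s - l / 2"]) (auto intro!: derivative_eq_intros deriv)
    qed
    then show "f b - l / 2 * b + l / 2 * t \<le> f t"
      by (simp add: algebra_simps)
  qed
  moreover have "filterlim (\<lambda>t. f b - l / 2 * b + l / 2 * t) at_top at_top"
    using \<open>l > 0\<close>
    by (intro filterlim_tendsto_add_at_top[OF tendsto_const]
        filterlim_tendsto_pos_mult_at_top[OF tendsto_const _ filterlim_ident]) simp
  ultimately show ?thesis
    using filterlim_at_top_mono by blast
qed

lemma tendsto_along_graph_at_top:
  fixes F :: "real \<Rightarrow> real \<Rightarrow> real"
  assumes "((\<lambda>(v, z). F v z) \<longlongrightarrow> c) (at_top \<times>\<^sub>F nhds L)"
    and "(x \<longlongrightarrow> L) at_top"
  shows "((\<lambda>v. F v (x v)) \<longlongrightarrow> c) at_top"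
  using tendsto_compose_filtermap[of "\<lambda>(v, z). F v z"]
    filterlim_compose[OF assms(1) filterlim_Pair[OF filterlim_ident assms(2)]]
  by simp

lemma tendsto_outgoing_null_field:
  fixes h :: "real \<Rightarrow> real \<Rightarrow> real" and xp xm :: "real \<Rightarrow> real"
  assumes "((\<lambda>(v, z). h v z) \<longlongrightarrow> c) (at_top \<times>\<^sub>F nhds z)"
    and "(xp \<longlongrightarrow> p) at_top" "(xm \<longlongrightarrow> m) at_top"
  shows "((\<lambda>(v, y). 1/2 * h v y * (y - xp v) * (y - xm v)) \<longlongrightarrow> 1/2 * c * (z - p) * (z - m))
    (at_top \<times>\<^sub>F nhds z)"
  using assms(1) filterlim_compose[OF assms(2) filterlim_fst] filterlim_compose[OF assms(3) filterlim_fst]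
  unfolding case_prod_beta' by (intro tendsto_intros filterlim_snd)

lemma filterlim_at_top_if_limit_field_pos:
  fixes f G :: "real \<Rightarrow> real" and F :: "real \<Rightarrow> real \<Rightarrow> real"
  assumes deriv: "\<And>t. t > a \<Longrightarrow> (f has_real_derivative F t (f t)) (at t)"
    and nonneg: "\<And>t. t > a \<Longrightarrow> F t (f t) \<ge> 0"
    and lim: "\<And>z. z > c \<Longrightarrow> ((\<lambda>(t, z). F t z) \<longlongrightarrow> G z) (at_top \<times>\<^sub>F nhds z)"
    and pos: "\<And>z. z > c \<Longrightarrow> G z > 0"
    and "a < b" "c < f b"
  shows "filterlim f at_top at_top"
proof -
  have "mono_on {a<..} f"
  proof (rule mono_onI)
    fix s t :: real
    assume s: "s \<in> {a<..}" and "s \<le> t"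
    show "f s \<le> f t"
    proof (rule DERIV_nonneg_imp_nondecreasing[OF \<open>s \<le> t\<close>])
      fix u assume "s \<le> u"
      with s have "u > a"
        by simp
      then show "\<exists>y. (f has_real_derivative y) (at u) \<and> y \<ge> 0"
        using deriv nonneg by blast
    qed
  qed
  then show ?thesis
  proof (cases rule: mono_on_tendsto_or_filterlim_at_top)
    case (2 L)
    with \<open>a < b\<close> \<open>c < f b\<close> have "c < L"
      by (meson less_le_trans)
    then have "((\<lambda>t. F t (f t)) \<longlongrightarrow> G L) at_top"
      using tendsto_along_graph_at_top[OF lim 2(1)] by simp
    then show ?thesis
      using filterlim_at_top_if_deriv_tendsto_pos[where f' = "\<lambda>t. F t (f t)", OF deriv] pos[OF \<open>c < L\<close>]
      by blast
  qed
qed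

theorem lemma1:
  fixes h :: "real \<Rightarrow> real \<Rightarrow> real"    (* h(v,x) *)
    and hinf :: "real \<Rightarrow> real"            (* h(\<infinity>,x) *)
    and xp xm xp' xm' :: "real \<Rightarrow> real"   (* x_+, x_- and their v-derivatives *)
    and rc :: real
    and x :: "real \<Rightarrow> real"                (* the outgoing null geodesic *)
    and v0 :: real
  assumes h_pos: "\<And>v y. y > - rc \<Longrightarrow> h v y > 0"
    and h_smooth: "\<And>v n y. y > - rc \<Longrightarrow> (deriv ^^ n) (h v) differentiable (at y)"
    and h_lim: "\<And>n y. y > - rc \<Longrightarrow>
        ((\<lambda>(v, z). (deriv ^^ n) (h v) z) \<longlongrightarrow> (deriv ^^ n) hinf y) (at_top \<times>\<^sub>F nhds y)"
    and hinf_analytic: "real_analytic_on hinf {y. y > - rc}"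
    and hinf_pos: "\<And>y. y > - rc \<Longrightarrow> hinf y > 0"
    and xm_pos: "\<And>v. xm v > - rc"
    and xm_lt_xp: "\<And>v. xm v < xp v"
    and xp_deriv: "\<And>v. (xp has_real_derivative xp' v) (at v)"
    and xp_decr: "\<And>v. xp' v < 0"
    and xm_deriv: "\<And>v. (xm has_real_derivative xm' v) (at v)"
    and xm_sign: "(\<forall>v. xm' v > 0) \<or> (\<forall>v. xm' v < 0) \<or> (\<forall>v. xm' v = 0)"
    and xp_lim: "(xp \<longlongrightarrow> 0) at_top"
    and xm_lim: "(xm \<longlongrightarrow> 0) at_top"
    and geod: "\<And>v. v \<ge> v0 \<Longrightarrow>
        (x has_real_derivative (1/2) * h v (x v) * (x v - xp v) * (x v - xm v)) (at v within {v0..})"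
    and init: "x v0 \<ge> xp v0"
  shows "(\<forall>v>v0. x v \<noteq> xp v) \<and> filterlim x at_top at_top"
proof -
  define F where "F v z = 1/2 * h v z * (z - xp v) * (z - xm v)" for v z
  have x_deriv: "(x has_real_derivative F v (x v)) (at v within {v0..})" if "v \<ge> v0" for v
    using geod[OF that] unfolding F_def .
  have outside: "x v > xp v" if "v > v0" for v
  proof (rule gt_strictly_decreasing_barrier[OF x_deriv xp_deriv xp_decr _ init that])
    fix t assume "x t = xp t"
    then show "F t (x t) \<ge> 0"
      unfolding F_def by simp
  qed
  have x_bounds: "x v > 0" "x v > - rc" "x v > xm v" if "v > v0" for v
    using outside[OF that] xm_lt_xp[of v] xm_pos[of v] gt_limit_if_deriv_neg[OF xp_deriv xp_decr xp_lim, of v]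
    by auto
  have "filterlim x at_top at_top"
  proof (rule filterlim_at_top_if_limit_field_pos[where c = "max 0 (- rc)" and b = "v0 + 1"])
    show "(x has_real_derivative F v (x v)) (at v)" if "v > v0" for v
      using has_field_derivative_at_if_within_atLeast[OF x_deriv that] that by simp
    show "F v (x v) \<ge> 0" if "v > v0" for v
      using h_pos[of "x v" v] x_bounds[OF that] outside[OF that] unfolding F_def by simp
    show "((\<lambda>(v, z). F v z) \<longlongrightarrow> 1/2 * hinf z * (z - 0) * (z - 0)) (at_top \<times>\<^sub>F nhds z)"
      if "z > max 0 (- rc)" for z
      using tendsto_outgoing_null_field[OF h_lim[of z 0] xp_lim xm_lim] that unfolding F_def by simp
    show "1/2 * hinf z * (z - 0) * (z - 0) > 0" if "z > max 0 (- rc)" for z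
      using hinf_pos[of z] that by simp
  qed (use x_bounds in auto)
  with outside show ?thesis
    by force
qed

end
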